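(* Let $\mathcal{C}$ be the Cesàro operator $\mathcal{C}(x)=\big(\frac1n\sum_{i=1}^n x_i\big)_n$. Fix $1\le p<\infty$ and $1<q,r<\infty$, and let $T\colon\ell^p\to\ell^q$ be a nontrivial continuous linear operator with matrix $a_{ij}=T(e^j)_i$. Let $h=(h_j)\in\ell^{s_{pr}}$ with $h_1\ne0$. The following are equivalent: (a) $T$ factors strongly through $\mathcal{C}$ and $M_h$, i.e. there exists $g\in\ell^{s_{rq}}$ such that $T(x)=g\,\mathcal{C}(hx)$ for all $x\in\ell^p$. (b) $a_{ij}=0$ for $j>i$, $a_{ij}=h_ja_{i1}/h_1$ for $j\le i$, and $(ia_{i1})_i\in\ell^{s_{rq}}$. (c) There is a real sequence $(\alpha_n)$ with $(n\alpha_n)_n\in\ell^{s_{rq}}$ such that $a_{ij}=h_j\alpha_i$ for $j\le i$ and $a_{ij}=0$ for $j>i$.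
   Context: $(e^n)$ denotes the standard unit vectors. For exponents $1\le a,b\le\infty$, $s_{ab}=\frac{ab}{a-b}$ if $1\le b<a<\infty$; $s_{ab}=b$ if $1\le b<a=\infty$; $s_{ab}=\infty$ if $1\le a\le b\le\infty$. Products of sequences are coordinatewise. $\mathcal{C}$ is bounded on $\ell^r$ for $1<r<\infty$. *)

theory Defs
  imports "HOL-Analysis.Analysis"
begin

text \<open>Sequences are real sequences indexed from 0 (paper index n corresponds to n - 1).\<close>

definition lp :: "ereal \<Rightarrow> (nat \<Rightarrow> real) set" where
  "lp p = {x. if p = \<infinity> then bounded (range x)
              else summable (\<lambda>n. \<bar>x n\<bar> powr real_of_ereal p)}"

definition lpnorm :: "real \<Rightarrow> (nat \<Rightarrow> real) \<Rightarrow> real" where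
  "lpnorm p x = (\<Sum>n. \<bar>x n\<bar> powr p) powr (1 / p)"

definition s_exp :: "ereal \<Rightarrow> ereal \<Rightarrow> ereal" where
  "s_exp a b = (if b < a \<and> a < \<infinity> then a * b / (a - b)
                else if b < a \<and> a = \<infinity> then b else \<infinity>)"

definition unitvec :: "nat \<Rightarrow> nat \<Rightarrow> real" where
  "unitvec j = (\<lambda>i. if i = j then 1 else 0)"

definition cesaro :: "(nat \<Rightarrow> real) \<Rightarrow> nat \<Rightarrow> real" where
  "cesaro x = (\<lambda>n. (\<Sum>i\<le>n. x i) / real (n + 1))"

definition bounded_linear_lp :: "real \<Rightarrow> real \<Rightarrow> ((nat \<Rightarrow> real) \<Rightarrow> (nat \<Rightarrow> real)) \<Rightarrow> bool" where
  "bounded_linear_lp p q T \<longleftrightarrow>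
     (\<forall>x\<in>lp (ereal p). T x \<in> lp (ereal q)) \<and>
     (\<forall>x\<in>lp (ereal p). \<forall>y\<in>lp (ereal p). T (\<lambda>n. x n + y n) = (\<lambda>n. T x n + T y n)) \<and>
     (\<forall>c. \<forall>x\<in>lp (ereal p). T (\<lambda>n. c * x n) = (\<lambda>n. c * T x n)) \<and>
     (\<exists>K. \<forall>x\<in>lp (ereal p). lpnorm q (T x) \<le> K * lpnorm p x)"

end

theory Submission
  imports Defs
begin

text \<open>A bounded operator \<open>T : \<ell>\<^sup>p \<rightarrow> \<ell>\<^sup>q\<close> is determined by its matrix: coordinate functionals
  are bounded on \<open>\<ell>\<^sup>q\<close> and tails of \<open>x \<in> \<ell>\<^sup>p\<close> tend to \<open>0\<close>, so \<open>(T x)\<^sub>i = \<Sum>\<^sub>j a\<^sub>i\<^sub>j x\<^sub>j\<close>.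
  As \<open>(g \<C>(h e\<^sup>j))\<^sub>i = g\<^sub>i h\<^sub>j / i\<close> for \<open>j \<le> i\<close> and \<open>0\<close> otherwise, (a) forces the matrix of (b) with
  \<open>g\<^sub>i = i a\<^sub>i\<^sub>1 / h\<^sub>1\<close>; conversely, for a matrix as in (b) the series is a finite sum equal to
  \<open>g\<^sub>i \<C>(hx)\<^sub>i\<close>. (b) and (c) differ only by the rescaling \<open>\<alpha>\<^sub>i = a\<^sub>i\<^sub>1 / h\<^sub>1\<close>.\<close>

lemma lp_cmult:
  assumes "x \<in> lp e"
  shows "(\<lambda>n. c * x n) \<in> lp e"
proof (cases "e = \<infinity>")
  case True
  have "range (\<lambda>n. c * x n) = (\<lambda>y. c *\<^sub>R y) ` range x" by auto
  then show ?thesis using assms True bounded_scaling[of "range x" c] by (simp add: lp_def)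
next
  case False
  let ?s = "real_of_ereal e"
  have "summable (\<lambda>n. \<bar>x n\<bar> powr ?s)" using assms False by (simp add: lp_def)
  then have "summable (\<lambda>n. \<bar>c\<bar> powr ?s * \<bar>x n\<bar> powr ?s)" by (rule summable_mult)
  moreover have "\<bar>c * x n\<bar> powr ?s = \<bar>c\<bar> powr ?s * \<bar>x n\<bar> powr ?s" for n
    by (simp add: abs_mult powr_mult)
  ultimately show ?thesis using False by (simp add: lp_def)
qed

lemma lp_eventually_zero:
  assumes "\<forall>n\<ge>N. y n = 0"
  shows "y \<in> lp (ereal p)"
proof -
  have "summable (\<lambda>n. \<bar>y n\<bar> powr p)"
    by (rule summable_finite[of "{..<N}"]) (use assms in auto)
  then show ?thesis by (simp add: lp_def)
qed

lemma unitvec_in_lp: "unitvec j \<in> lp (ereal p)"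
  by (rule lp_eventually_zero[of "Suc j"]) (auto simp: unitvec_def)

lemma lp_abs_le:
  assumes "x \<in> lp (ereal p)" "0 \<le> p" "\<And>n. \<bar>y n\<bar> \<le> \<bar>x n\<bar>"
  shows "y \<in> lp (ereal p)"
proof -
  have "summable (\<lambda>n. \<bar>x n\<bar> powr p)" using assms(1) by (simp add: lp_def)
  moreover have "norm (\<bar>y n\<bar> powr p) \<le> \<bar>x n\<bar> powr p" for n
    using assms(2,3) by (simp add: powr_mono2)
  ultimately have "summable (\<lambda>n. \<bar>y n\<bar> powr p)"
    by (blast intro: summable_comparison_test')
  then show ?thesis by (simp add: lp_def)
qed

lemma abs_le_lpnorm:
  assumes "y \<in> lp (ereal q)" "0 < q"
  shows "\<bar>y i\<bar> \<le> lpnorm q y"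
proof -
  have "summable (\<lambda>n. \<bar>y n\<bar> powr q)" using assms by (simp add: lp_def)
  then have "(\<Sum>n\<in>{i}. \<bar>y n\<bar> powr q) \<le> (\<Sum>n. \<bar>y n\<bar> powr q)"
    by (rule sum_le_suminf) auto
  then have "(\<bar>y i\<bar> powr q) powr (1/q) \<le> (\<Sum>n. \<bar>y n\<bar> powr q) powr (1/q)"
    using assms by (intro powr_mono2) auto
  moreover have "(\<bar>y i\<bar> powr q) powr (1/q) = \<bar>y i\<bar>" using assms by (simp add: powr_powr)
  ultimately show ?thesis by (simp add: lpnorm_def)
qed

lemma lpnorm_tail_tendsto_zero:
  assumes "x \<in> lp (ereal p)" "0 < p"
  shows "(\<lambda>N. lpnorm p (\<lambda>n. if n < N then 0 else x n)) \<longlonglongrightarrow> 0"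
proof -
  define f where "f n = \<bar>x n\<bar> powr p" for n
  have f: "summable f" using assms unfolding f_def by (simp add: lp_def)
  have tail_sum: "(\<Sum>n. \<bar>if n < N then 0 else x n\<bar> powr p) = (\<Sum>n. f n) - (\<Sum>i<N. f i)" for N
  proof -
    have "summable (\<lambda>n. \<bar>if n < N then 0 else x n\<bar> powr p)"
      by (rule summable_comparison_test[OF _ f]) (auto simp: f_def)
    then have "(\<Sum>n. \<bar>if n < N then 0 else x n\<bar> powr p) = (\<Sum>n. f (n + N))"
      by (subst suminf_split_initial_segment[of _ N]) (simp_all add: f_def)
    also have "\<dots> = (\<Sum>n. f n) - (\<Sum>i<N. f i)" by (rule suminf_minus_initial_segment[OF f])
    finally show ?thesis .
  qed
  have "(\<lambda>N. (\<Sum>n. f n) - (\<Sum>i<N. f i)) \<longlonglongrightarrow> (\<Sum>n. f n) - (\<Sum>n. f n)"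
    by (intro tendsto_intros summable_LIMSEQ f)
  then have tail_lim: "(\<lambda>N. (\<Sum>n. \<bar>if n < N then 0 else x n\<bar> powr p)) \<longlonglongrightarrow> 0"
    by (simp add: tail_sum)
  have partial_le: "(\<Sum>i<N. f i) \<le> (\<Sum>n. f n)" for N
    by (rule sum_le_suminf[OF f]) (auto simp: f_def)
  have "(\<lambda>N. (\<Sum>n. \<bar>if n < N then 0 else x n\<bar> powr p) powr (1/p)) \<longlonglongrightarrow> 0"
    by (rule tendsto_zero_powrI[OF tail_lim tendsto_const always_eventually])
       (use assms(2) partial_le in \<open>simp_all add: tail_sum\<close>)
  then show ?thesis by (simp add: lpnorm_def)
qed

lemma bounded_linear_lp_zero:
  assumes "bounded_linear_lp p q T"
  shows "T (\<lambda>n. 0) = (\<lambda>n. 0)"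
proof -
  have zero: "(\<lambda>n::nat. 0::real) \<in> lp (ereal p)" by (rule lp_eventually_zero[of 0]) simp
  have "\<forall>c. \<forall>x\<in>lp (ereal p). T (\<lambda>n. c * x n) = (\<lambda>n. c * T x n)"
    using assms unfolding bounded_linear_lp_def by blast
  from bspec[OF spec[OF this, of 0] zero] show ?thesis by simp
qed

lemma bounded_linear_lp_truncation:
  assumes "bounded_linear_lp p q T"
  shows "T (\<lambda>n. if n < N then x n else 0) = (\<lambda>i. \<Sum>j<N. T (unitvec j) i * x j)"
proof (induction N)
  case 0
  then show ?case using bounded_linear_lp_zero[OF assms] by simp
next
  case (Suc N)
  have add: "\<And>y z. y \<in> lp (ereal p) \<Longrightarrow> z \<in> lp (ereal p) \<Longrightarrow>
               T (\<lambda>n. y n + z n) = (\<lambda>n. T y n + T z n)"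
    and cmult: "\<And>c y. y \<in> lp (ereal p) \<Longrightarrow> T (\<lambda>n. c * y n) = (\<lambda>n. c * T y n)"
    using assms unfolding bounded_linear_lp_def by blast+
  have head: "(\<lambda>n::nat. if n < N then x n else 0) \<in> lp (ereal p)"
    by (rule lp_eventually_zero[of N]) auto
  have "T (\<lambda>n. if n < Suc N then x n else 0)
          = T (\<lambda>n. (if n < N then x n else 0) + x N * unitvec N n)"
    by (rule arg_cong[of _ _ T]) (auto simp: unitvec_def less_Suc_eq)
  also have "\<dots> = (\<lambda>i. T (\<lambda>n. if n < N then x n else 0) i + T (\<lambda>n. x N * unitvec N n) i)"
    by (rule add[OF head lp_cmult[OF unitvec_in_lp]])
  also have "\<dots> = (\<lambda>i. (\<Sum>j<N. T (unitvec j) i * x j) + x N * T (unitvec N) i)"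
    using Suc.IH cmult[OF unitvec_in_lp, of "x N" N] by simp
  finally show ?case by (simp add: mult.commute)
qed

lemma bounded_linear_lp_coord_sums:
  assumes "0 < p" "0 < q" and T: "bounded_linear_lp p q T" and x: "x \<in> lp (ereal p)"
  shows "(\<lambda>j. T (unitvec j) i * x j) sums T x i"
proof -
  define head where "head N = (\<lambda>n. if n < N then x n else 0)" for N
  define tail where "tail N = (\<lambda>n. if n < N then 0 else x n)" for N
  have img: "\<And>y. y \<in> lp (ereal p) \<Longrightarrow> T y \<in> lp (ereal q)"
    and add: "\<And>y z. y \<in> lp (ereal p) \<Longrightarrow> z \<in> lp (ereal p) \<Longrightarrow>
               T (\<lambda>n. y n + z n) = (\<lambda>n. T y n + T z n)"
    using T unfolding bounded_linear_lp_def by blast+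
  obtain K where K: "\<And>y. y \<in> lp (ereal p) \<Longrightarrow> lpnorm q (T y) \<le> K * lpnorm p y"
    using T unfolding bounded_linear_lp_def by blast
  have head: "head N \<in> lp (ereal p)" for N
    by (rule lp_eventually_zero[of N]) (auto simp: head_def)
  have tail: "tail N \<in> lp (ereal p)" for N
    by (rule lp_abs_le[OF x]) (use assms(1) in \<open>auto simp: tail_def\<close>)
  have split: "T (head N) i = T x i - T (tail N) i" for N
  proof -
    have "(\<lambda>n. head N n + tail N n) = x" by (auto simp: head_def tail_def)
    then have "T x = (\<lambda>n. T (head N) n + T (tail N) n)"
      using add[OF head[of N] tail[of N]] by simp
    then show ?thesis by simp
  qed
  have bound: "norm (T (tail N) i) \<le> K * lpnorm p (tail N)" for N
  proof -
    have "norm (T (tail N) i) \<le> lpnorm q (T (tail N))"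
      unfolding real_norm_def by (rule abs_le_lpnorm[OF img[OF tail] assms(2)])
    also have "\<dots> \<le> K * lpnorm p (tail N)" by (rule K[OF tail])
    finally show ?thesis .
  qed
  have "(\<lambda>N. K * lpnorm p (tail N)) \<longlonglongrightarrow> 0"
    using tendsto_mult_right_zero[OF lpnorm_tail_tendsto_zero[OF x assms(1)], of K]
    by (simp add: tail_def)
  then have "(\<lambda>N. T (tail N) i) \<longlonglongrightarrow> 0"
    by (rule Lim_null_comparison[OF always_eventually[OF allI[OF bound]]])
  then have "(\<lambda>N. T x i - T (tail N) i) \<longlonglongrightarrow> T x i - 0"
    by (intro tendsto_diff tendsto_const)
  then have "(\<lambda>N. T (head N) i) \<longlonglongrightarrow> T x i"
    by (simp add: split)
  then show ?thesis
    using bounded_linear_lp_truncation[OF T] by (simp add: sums_def head_def)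
qed

lemma bounded_linear_lp_lower_triangular_apply:
  assumes "0 < p" "0 < q" "bounded_linear_lp p q T"
    and lower: "\<forall>i j. i < j \<longrightarrow> T (unitvec j) i = 0"
    and "x \<in> lp (ereal p)"
  shows "T x i = (\<Sum>j\<le>i. T (unitvec j) i * x j)"
proof -
  have "(\<lambda>j. T (unitvec j) i * x j) sums (\<Sum>j\<le>i. T (unitvec j) i * x j)"
    by (rule sums_finite) (use lower in auto)
  then show ?thesis
    using bounded_linear_lp_coord_sums[OF assms(1-3,5)] by (rule sums_unique2[symmetric])
qed

lemma cesaro_mult_unitvec:
  "cesaro (\<lambda>i. h i * unitvec j i) n = (if j \<le> n then h j / real (n + 1) else 0)"
  by (simp add: cesaro_def unitvec_def if_distrib[of "\<lambda>t. h _ * t"] cong: if_cong)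

lemma cesaro_factorization_matrix:
  assumes "\<forall>x\<in>lp (ereal p). T x = (\<lambda>n. g n * cesaro (\<lambda>i. h i * x i) n)"
  shows "T (unitvec j) i = (if j \<le> i then g i * h j / real (i + 1) else 0)"
  using assms unitvec_in_lp[of j p] by (simp add: cesaro_mult_unitvec)

lemma bounded_linear_lp_cesaro_factorization:
  assumes "0 < p" "0 < q" "bounded_linear_lp p q T" "h 0 \<noteq> 0"
    and lower: "\<forall>i j. i < j \<longrightarrow> T (unitvec j) i = 0"
    and rank_one: "\<forall>i j. j \<le> i \<longrightarrow> T (unitvec j) i = h j * T (unitvec 0) i / h 0"
    and "x \<in> lp (ereal p)"
  shows "T x = (\<lambda>n. (real (n + 1) * T (unitvec 0) n / h 0) * cesaro (\<lambda>i. h i * x i) n)"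
proof
  fix n
  have "T x n = (\<Sum>j\<le>n. T (unitvec j) n * x j)"
    by (rule bounded_linear_lp_lower_triangular_apply[OF assms(1-3) lower assms(7)])
  also have "\<dots> = (\<Sum>j\<le>n. T (unitvec 0) n / h 0 * (h j * x j))"
  proof (rule sum.cong[OF refl])
    fix j assume "j \<in> {..n}"
    then have "j \<le> n" by simp
    with rank_one have "T (unitvec j) n = h j * T (unitvec 0) n / h 0" by blast
    then show "T (unitvec j) n * x j = T (unitvec 0) n / h 0 * (h j * x j)" by simp
  qed
  also have "\<dots> = T (unitvec 0) n / h 0 * (\<Sum>j\<le>n. h j * x j)"
    by (rule sum_distrib_left[symmetric])
  also have "\<dots> = (real (n + 1) * T (unitvec 0) n / h 0) * cesaro (\<lambda>i. h i * x i) n"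
    by (simp add: cesaro_def)
  finally show "T x n = (real (n + 1) * T (unitvec 0) n / h 0) * cesaro (\<lambda>i. h i * x i) n" .
qed

lemma bounded_linear_lp_cesaro_factorization_iff:
  assumes "0 < p" "0 < q" "bounded_linear_lp p q T" "h 0 \<noteq> 0"
  shows "(\<exists>g\<in>lp e. \<forall>x\<in>lp (ereal p). T x = (\<lambda>n. g n * cesaro (\<lambda>i. h i * x i) n))
    \<longleftrightarrow> (\<forall>i j. i < j \<longrightarrow> T (unitvec j) i = 0) \<and>
        (\<forall>i j. j \<le> i \<longrightarrow> T (unitvec j) i = h j * T (unitvec 0) i / h 0) \<and>
        (\<lambda>i. real (i + 1) * T (unitvec 0) i) \<in> lp e"
    (is "?factor \<longleftrightarrow> ?lower \<and> ?rank_one \<and> ?weight")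
proof
  assume ?factor
  then obtain g where g: "g \<in> lp e"
    and matrix: "\<And>i j. T (unitvec j) i = (if j \<le> i then g i * h j / real (i + 1) else 0)"
    using cesaro_factorization_matrix by blast
  have first_column: "(\<lambda>i. real (i + 1) * T (unitvec 0) i) = (\<lambda>i. h 0 * g i)"
    by (simp add: matrix mult.commute)
  have ?weight
    unfolding first_column by (rule lp_cmult[OF g])
  moreover have ?lower by (simp add: matrix)
  moreover have ?rank_one using assms(4) by (simp add: matrix)
  ultimately show "?lower \<and> ?rank_one \<and> ?weight" by blast
next
  assume "?lower \<and> ?rank_one \<and> ?weight"
  then have lower: ?lower and rank_one: ?rank_one and weight: ?weight by blast+
  define g where "g n = (1 / h 0) * (real (n + 1) * T (unitvec 0) n)" for n
  have "g \<in> lp e"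
    unfolding g_def by (rule lp_cmult[OF weight])
  moreover have "T x = (\<lambda>n. g n * cesaro (\<lambda>i. h i * x i) n)" if "x \<in> lp (ereal p)" for x
    using bounded_linear_lp_cesaro_factorization[where h = h, OF assms lower rank_one that]
    by (simp add: g_def)
  ultimately show ?factor by blast
qed

lemma lower_triangular_rank_one_iff:
  fixes a :: "nat \<Rightarrow> nat \<Rightarrow> real"
  assumes "h 0 \<noteq> 0"
  shows "((\<forall>i j. i < j \<longrightarrow> a i j = 0) \<and>
          (\<forall>i j. j \<le> i \<longrightarrow> a i j = h j * a i 0 / h 0) \<and>
          (\<lambda>i. real (i + 1) * a i 0) \<in> lp e)
    \<longleftrightarrow> (\<exists>\<alpha>. (\<lambda>n. real (n + 1) * \<alpha> n) \<in> lp e \<and>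
             (\<forall>i j. j \<le> i \<longrightarrow> a i j = h j * \<alpha> i) \<and>
             (\<forall>i j. i < j \<longrightarrow> a i j = 0))"
    (is "?lower \<and> ?rank_one \<and> ?weight \<longleftrightarrow> ?factor")
proof
  assume "?lower \<and> ?rank_one \<and> ?weight"
  then have lower: ?lower and rank_one: ?rank_one and weight: ?weight by blast+
  have rescale: "(\<lambda>n. real (n + 1) * (a n 0 / h 0)) = (\<lambda>n. (1 / h 0) * (real (n + 1) * a n 0))"
    by (simp add: fun_eq_iff)
  have "(\<lambda>n. real (n + 1) * (a n 0 / h 0)) \<in> lp e"
    unfolding rescale by (rule lp_cmult[OF weight])
  moreover have "\<forall>i j. j \<le> i \<longrightarrow> a i j = h j * (a i 0 / h 0)"
  proof (intro allI impI)
    fix i j :: nat assume "j \<le> i"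
    with rank_one have "a i j = h j * a i 0 / h 0" by blast
    then show "a i j = h j * (a i 0 / h 0)" by simp
  qed
  ultimately show ?factor
    using lower by (intro exI[of _ "\<lambda>i. a i 0 / h 0"]) blast
next
  assume ?factor
  then obtain \<alpha> where \<alpha>: "(\<lambda>n. real (n + 1) * \<alpha> n) \<in> lp e"
    and rank_one: "\<forall>i j. j \<le> i \<longrightarrow> a i j = h j * \<alpha> i" and lower: ?lower
    by blast
  have first_column: "a i 0 = h 0 * \<alpha> i" for i using rank_one by simp
  have rescale: "(\<lambda>i. real (i + 1) * a i 0) = (\<lambda>i. h 0 * (real (i + 1) * \<alpha> i))"
    by (simp add: first_column mult.left_commute)
  have ?weight
    unfolding rescale by (rule lp_cmult[OF \<alpha>])
  moreover have ?rank_one using rank_one assms by (simp add: first_column)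
  ultimately show "?lower \<and> ?rank_one \<and> ?weight" using lower by blast
qed

theorem proposition5p4:
  fixes p q r :: real
    and T :: "(nat \<Rightarrow> real) \<Rightarrow> (nat \<Rightarrow> real)"
    and h :: "nat \<Rightarrow> real"
  assumes "1 \<le> p" and "1 < q" and "1 < r"
    and "bounded_linear_lp p q T"
    and "\<exists>x\<in>lp (ereal p). T x \<noteq> (\<lambda>n. 0)"
    and "h \<in> lp (s_exp (ereal p) (ereal r))"
    and "h 0 \<noteq> 0"
  defines "a \<equiv> (\<lambda>i j. T (unitvec j) i)"
  shows "((\<exists>g \<in> lp (s_exp (ereal r) (ereal q)).
             \<forall>x\<in>lp (ereal p). T x = (\<lambda>n. g n * cesaro (\<lambda>i. h i * x i) n))
          \<longleftrightarrow>
          ((\<forall>i j. i < j \<longrightarrow> a i j = 0) \<and>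
           (\<forall>i j. j \<le> i \<longrightarrow> a i j = h j * a i 0 / h 0) \<and>
           (\<lambda>i. real (i + 1) * a i 0) \<in> lp (s_exp (ereal r) (ereal q))))
       \<and>
         (((\<forall>i j. i < j \<longrightarrow> a i j = 0) \<and>
           (\<forall>i j. j \<le> i \<longrightarrow> a i j = h j * a i 0 / h 0) \<and>
           (\<lambda>i. real (i + 1) * a i 0) \<in> lp (s_exp (ereal r) (ereal q)))
          \<longleftrightarrow>
          (\<exists>\<alpha> :: nat \<Rightarrow> real. (\<lambda>n. real (n + 1) * \<alpha> n) \<in> lp (s_exp (ereal r) (ereal q)) \<and>
             (\<forall>i j. j \<le> i \<longrightarrow> a i j = h j * \<alpha> i) \<and>
             (\<forall>i j. i < j \<longrightarrow> a i j = 0)))"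
proof -
  have pos: "0 < p" "0 < q" using assms(1,2) by simp_all
  show ?thesis
    unfolding a_def
    by (intro conjI bounded_linear_lp_cesaro_factorization_iff[where h = h, OF pos assms(4,7)]
        lower_triangular_rank_one_iff[where h = h, OF assms(7)])
qed

end
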